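(* Let $n=2k$ with $k\ge1$, let $\Omega\subseteq\mathbb{R}^{2k}$ be open, and let $f=[f_1,\dots,f_{2k}]:\Omega\to\mathbb{R}^{2k}$ be analytic on $\Omega$. Then: (1) (Cauchy–Riemann equations) for all $1\le m,i\le k$, on $\Omega$, $$\frac{\partial f_m}{\partial x_i}=\frac{\partial f_{m+k}}{\partial x_{i+k}},\qquad \frac{\partial f_{m+k}}{\partial x_i}=-\frac{\partial f_m}{\partial x_{i+k}};$$ (2) for all $1\le m,i\le k$, $\frac{\partial^2 f_m}{\partial x_i^2}+\frac{\partial^2 f_m}{\partial x_{i+k}^2}=0$ and $\frac{\partial^2 f_{m+k}}{\partial x_i^2}+\frac{\partial^2 f_{m+k}}{\partial x_{i+k}^2}=0$ on $\Omega$; (3) each component $f_m$, $1\le m\le 2k$, is harmonic on $\Omega$: it has continuous second order partial derivatives and $\sum_{i=1}^{2k}\frac{\partial^2 f_m}{\partial x_i^2}=0$.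
   Context: Let $n\ge2$ and let $\mathfrak g$ be the real $n\times n$ matrix with $\mathfrak g_{i,i+1}=1$ ($1\le i\le n-1$), $\mathfrak g_{n,1}=-1$, other entries $0$. For $u\in\mathbb{R}^n$ set $\varsigma(u)=\sum_{\ell=1}^n u_\ell\mathfrak g^{\ell-1}$ and $u\circledast v=\varsigma^{-1}(\varsigma(u)\varsigma(v))$; $\mathbb{R}^n$ with $\circledast$ is a commutative algebra with identity $e_1$. Let $\mathcal G_n=\{x:\det\varsigma(x)\ne0\}$, the group of invertible elements; write $\delta^{-1}$ for the $\circledast$-inverse of $\delta\in\mathcal G_n$. For an open $\Omega\subseteq\mathbb{R}^n$ and $f=[f_1,\dots,f_n]:\Omega\to\mathbb{R}^n$ (each $f_j$ real-valued), $f$ is differentiable at $a\in\Omega$ if the limit $f'(a)=\lim_{\delta\to0,\ \delta\in\mathcal G_n}\big(f(a+\delta)-f(a)\big)\circledast\delta^{-1}$ exists. $f$ is analytic on $\Omega$ if it is differentiable at every point of $\Omega$ and all second order partial derivatives $\partial^2 f_m/\partial x_i\partial x_j$ exist and are continuous on $\Omega$. *)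

theory Defs
  imports "HOL-Analysis.Analysis" "HOL-Library.Numeral_Type"
begin

text \<open>We model R^n with n = 2k as real^('k bit0), where CARD('k) = k >= 1.
  Coordinates are indexed 0-based: paper index j (1 <= j <= 2k) corresponds to
  the type element ix (j - 1).\<close>

definition idx :: "'k::finite bit0 \<Rightarrow> nat" where
  "idx a = nat (Rep_bit0 a)"

definition ix :: "nat \<Rightarrow> 'k::finite bit0" where
  "ix m = of_nat m"

definition gmat :: "real^('k::finite bit0)^('k bit0)" where
  "gmat = (\<chi> a b. if idx b = idx a + 1 then 1
                   else if idx a = CARD('k bit0) - 1 \<and> idx b = 0 then -1 else 0)"

primrec mpow :: "real^'n^'n \<Rightarrow> nat \<Rightarrow> real^'n^'n" where
  "mpow A 0 = mat 1"
| "mpow A (Suc l) = mpow A l ** A"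

definition vsig :: "real^('k::finite bit0) \<Rightarrow> real^('k bit0)^('k bit0)" where
  "vsig u = (\<Sum>l<CARD('k bit0). (u $ ix l) *\<^sub>R mpow gmat l)"

definition cmul :: "real^('k::finite bit0) \<Rightarrow> real^('k bit0) \<Rightarrow> real^('k bit0)" where
  "cmul u v = inv vsig (vsig u ** vsig v)"

definition cunit :: "real^('k::finite bit0)" where
  "cunit = axis (ix 0) 1"

definition Gn :: "(real^('k::finite bit0)) set" where
  "Gn = {x. det (vsig x) \<noteq> 0}"

definition cinv :: "real^('k::finite bit0) \<Rightarrow> real^('k bit0)" where
  "cinv d = (THE y. cmul d y = cunit)"

definition cdifferentiable_at ::
  "(real^('k::finite bit0) \<Rightarrow> real^('k bit0)) \<Rightarrow> real^('k bit0) \<Rightarrow> bool" where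
  "cdifferentiable_at f a \<longleftrightarrow>
     (\<exists>L. ((\<lambda>d. cmul (f (a + d) - f a) (cinv d)) \<longlongrightarrow> L) (at 0 within Gn))"

definition has_partial :: "'n::finite \<Rightarrow> (real^'n \<Rightarrow> real) \<Rightarrow> real^'n \<Rightarrow> bool" where
  "has_partial i g x \<longleftrightarrow> (\<lambda>t. g (x + t *\<^sub>R axis i 1)) differentiable (at 0)"

definition partial :: "'n::finite \<Rightarrow> (real^'n \<Rightarrow> real) \<Rightarrow> real^'n \<Rightarrow> real" where
  "partial i g x = deriv (\<lambda>t. g (x + t *\<^sub>R axis i 1)) 0"

definition C2_partials :: "(real^'n::finite) set \<Rightarrow> (real^'n \<Rightarrow> real) \<Rightarrow> bool" where
  "C2_partials S g \<longleftrightarrow>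
     (\<forall>i j. (\<forall>x\<in>S. has_partial j g x) \<and>
            (\<forall>x\<in>S. has_partial i (partial j g) x) \<and>
            continuous_on S (partial i (partial j g)))"

definition analytic_on_set ::
  "(real^('k::finite bit0)) set \<Rightarrow> (real^('k bit0) \<Rightarrow> real^('k bit0)) \<Rightarrow> bool" where
  "analytic_on_set S f \<longleftrightarrow>
     (\<forall>a\<in>S. cdifferentiable_at f a) \<and> (\<forall>m. C2_partials S (\<lambda>y. f y $ m))"

definition harmonic_on_set :: "(real^'n::finite) set \<Rightarrow> (real^'n \<Rightarrow> real) \<Rightarrow> bool" where
  "harmonic_on_set S g \<longleftrightarrow>
     C2_partials S g \<and> (\<forall>x\<in>S. (\<Sum>i\<in>UNIV. partial i (partial i g) x) = 0)"

end

(* The map vsig identifies (R^n, cmul) with the commutative algebra R[g], in which g^n = -1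
   (n = 2k). Since vsig (t e_b) = t g^b is invertible, the limit defining f'(a) may be taken
   along the directions t e_b, which gives  d_b f(a) = f'(a) cmul e_b,  i.e. the row
   f'(a) g^b. Multiplying by g^(i+k) instead of g^i shifts the columns by k and negates the
   wrapped-around half, which is exactly the Cauchy-Riemann system. Differentiating it once
   more and using the symmetry of mixed second partials of a C^2 function (a second-difference
   mean value argument) gives the Laplace equation in each pair of variables (x_i, x_(i+k));
   summing over the k pairs gives harmonicity. *)

theory Submission
  imports Defs
begin

lemma Rep_bit0_nonneg: "0 \<le> Rep_bit0 (a::'k::finite bit0)"
  using bit0.Rep_mod[of a] bit0.size0 by (metis pos_mod_sign)

lemma idx_less_card: "idx (a::'k::finite bit0) < CARD('k bit0)"
  unfolding idx_def using bit0.Rep_less_n[of a] Rep_bit0_nonneg[of a] by linarith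

lemma idx_ix: "m < CARD('k::finite bit0) \<Longrightarrow> idx (ix m :: 'k bit0) = m"
  unfolding idx_def ix_def bit0.of_nat_eq
  using bit0.Abs_inverse[of "int m", where 'a='k] by simp

lemma ix_idx: "ix (idx (a::'k::finite bit0)) = a"
  unfolding idx_def ix_def bit0.of_nat_eq
  using Rep_bit0_nonneg[of a] bit0.Rep_mod[of a, simplified] by (simp add: bit0.Rep_inverse)

lemma idx_eq_iff: "idx (a::'k::finite bit0) = idx b \<longleftrightarrow> a = b"
  by (metis ix_idx)

lemma sum_if_idx_eq:
  assumes "K < CARD('k::finite bit0)"
  shows "(\<Sum>e\<in>UNIV. (if idx (e::'k bit0) = K then X e else 0)) = (X (ix K) :: real)"
proof -
  have "\<And>e. (idx (e::'k bit0) = K) = (e = ix K)" using assms by (metis idx_ix ix_idx)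
  then show ?thesis by (simp add: sum.delta')
qed

lemma sum_lessThan_double: "(\<Sum>l<(K::nat)+K. F l) = (\<Sum>i<K. F i + F (i + K) :: real)"
proof -
  have "(\<Sum>l<K+K. F l) = sum F {0..<K} + sum F {K..<K+K}"
    by (simp add: lessThan_atLeast0 sum.atLeastLessThan_concat)
  also have "sum F {K..<K+K} = sum (\<lambda>i. F (i + K)) {0..<K}"
    using sum.shift_bounds_nat_ivl[of F 0 K K] by simp
  finally show ?thesis by (simp add: lessThan_atLeast0 sum.distrib)
qed

lemma sum_bit0_halves:
  "(\<Sum>c\<in>UNIV. T c) = (\<Sum>i<CARD('k). T (ix i :: 'k::finite bit0) + T (ix (i + CARD('k))) :: real)"
proof -
  have U: "(UNIV :: 'k bit0 set) = ix ` {..<CARD('k) + CARD('k)}"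
  proof (intro set_eqI iffI)
    fix c :: "'k bit0"
    have "idx c \<in> {..<CARD('k) + CARD('k)}" using idx_less_card[of c] by simp
    then show "c \<in> ix ` {..<CARD('k) + CARD('k)}" by (rule rev_image_eqI) (simp add: ix_idx)
  qed simp
  have "inj_on (ix :: nat \<Rightarrow> 'k bit0) {..<CARD('k) + CARD('k)}"
    by (rule inj_onI) (metis idx_ix lessThan_iff card_bit0 mult_2)
  then show ?thesis unfolding U by (simp add: sum.reindex sum_lessThan_double)
qed

lemma bit0_halves_cases:
  obtains j where "j < CARD('k)" "c = (ix j :: 'k::finite bit0) \<or> c = ix (j + CARD('k))"
proof (cases "idx c < CARD('k)")
  case True
  then show ?thesis using that[of "idx c"] by (simp add: ix_idx)
next
  case False
  then show ?thesis using that[of "idx c - CARD('k)"] idx_less_card[of c] by (simp add: ix_idx)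
qed

lemma gmat_entry: "gmat $ a $ b = (if idx b = idx a + 1 then 1
   else if idx a = CARD('k::finite bit0) - 1 \<and> idx (b::'k bit0) = 0 then -1 else 0)"
  by (simp add: gmat_def)

lemma mpow_gmat_entry:
  fixes c b :: "'k::finite bit0"
  assumes "l \<le> CARD('k bit0)"
  shows "mpow gmat l $ c $ b =
    (if idx c + l < CARD('k bit0) then (if idx b = idx c + l then 1 else 0)
     else (if idx b + CARD('k bit0) = idx c + l then -1 else 0))"
  using assms
proof (induction l arbitrary: b)
  case 0
  then show ?case using idx_less_card[of c] by (auto simp: mat_def idx_eq_iff)
next
  case (Suc l)
  let ?N = "CARD('k bit0)"
  have IH: "\<And>e. mpow gmat l $ c $ e = (if idx c + l < ?N then (if idx e = idx c + l then 1 else 0)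
     else (if idx e + ?N = idx c + l then -1 else 0))" using Suc by simp
  have "mpow gmat (Suc l) $ c $ b = (\<Sum>e\<in>UNIV. mpow gmat l $ c $ e * gmat $ e $ b)"
    by (simp add: matrix_matrix_mult_def)
  also have "\<dots> = (if idx c + Suc l < ?N then (if idx b = idx c + Suc l then 1 else 0)
     else (if idx b + ?N = idx c + Suc l then -1 else 0))"
  proof (cases "idx c + l < ?N")
    case True
    have "(\<Sum>e\<in>UNIV. mpow gmat l $ c $ e * gmat $ e $ b)
        = (\<Sum>e\<in>UNIV. (if idx e = idx c + l then gmat $ e $ b else 0))"
      using True by (intro sum.cong) (auto simp: IH)
    also have "\<dots> = gmat $ ix (idx c + l) $ b" using True by (rule sum_if_idx_eq)
    finally show ?thesis using True idx_less_card[of b] by (auto simp: gmat_entry idx_ix)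
  next
    case False
    define K where "K = idx c + l - ?N"
    have K: "K < ?N" "K + 1 < ?N" using False Suc.prems idx_less_card[of c] unfolding K_def by auto
    have "(\<Sum>e\<in>UNIV. mpow gmat l $ c $ e * gmat $ e $ b)
        = (\<Sum>e\<in>UNIV. (if idx e = K then - gmat $ e $ b else 0))"
      using False by (intro sum.cong) (auto simp: IH K_def)
    also have "\<dots> = - gmat $ ix K $ b" using K(1) by (rule sum_if_idx_eq)
    finally show ?thesis using False K idx_less_card[of b] by (auto simp: gmat_entry idx_ix K_def)
  qed
  finally show ?case .
qed

lemma mpow_gmat_card: "mpow gmat CARD('k::finite bit0) = - (mat 1 :: real^'k bit0^'k bit0)"
  by (auto simp: vec_eq_iff mpow_gmat_entry mat_def idx_eq_iff)

lemma mpow_add: "mpow A (a + b) = mpow A a ** mpow A b"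
  by (induction b) (simp_all add: matrix_mul_assoc)

lemma mpow_commute: "mpow A a ** mpow A b = mpow A b ** mpow A a"
  by (metis add.commute mpow_add)

lemma scaleR_mpow_commute: "(c *\<^sub>R mpow A l) ** A = A ** (c *\<^sub>R mpow (A::real^'n^'n) l)"
  using mpow_commute[of A l 1]
  by (simp add: scalar_matrix_assoc[symmetric] matrix_scalar_ac)

lemma matrix_mul_sum_left: "(\<Sum>l\<in>L. M l) ** (A::real^'n^'n) = (\<Sum>l\<in>L. M l ** A)"
  by (simp add: matrix_matrix_mult_def vec_eq_iff sum_component sum_distrib_right)
    (use sum.swap in fastforce)

lemma matrix_mul_sum_right: "(A::real^'n^'n) ** (\<Sum>l\<in>L. M l) = (\<Sum>l\<in>L. A ** M l)"
  by (simp add: matrix_matrix_mult_def vec_eq_iff sum_component sum_distrib_left)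
    (use sum.swap in fastforce)

lemma matrix_mul_diff_left: "(B - C) ** (A::real^'n^'n) = B ** A - C ** A"
  by (simp add: matrix_matrix_mult_def vec_eq_iff sum_subtractf left_diff_distrib)

lemma matrix_mul_diff_right: "(A::real^'n^'n) ** (B - C) = A ** B - A ** C"
  by (simp add: matrix_matrix_mult_def vec_eq_iff sum_subtractf right_diff_distrib)

lemma matrix_mul_scaleR_right: "A ** (c *\<^sub>R B) = c *\<^sub>R ((A::real^'n^'n) ** B)"
  by (simp add: matrix_scalar_ac scalar_matrix_assoc)

lemma vsig_entry:
  "vsig u $ a $ b = (\<Sum>l<CARD('k::finite bit0). u $ ix l * mpow gmat l $ a $ (b::'k bit0))"
  unfolding vsig_def by (simp add: sum_component)

lemma vsig_row_0: "vsig u $ ix 0 = (u :: real^'k::finite bit0)"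
proof -
  have i0: "idx (ix 0 :: 'k bit0) = 0" by (simp add: idx_ix)
  have "vsig u $ ix 0 $ c = u $ c" for c :: "'k bit0"
  proof -
    have "vsig u $ ix 0 $ c = (\<Sum>l<CARD('k bit0). (if l = idx c then u $ ix l else 0))"
      unfolding vsig_entry by (intro sum.cong) (auto simp: mpow_gmat_entry i0)
    also have "\<dots> = u $ c" using idx_less_card[of c] by (simp add: ix_idx)
    finally show ?thesis .
  qed
  then show ?thesis by (simp add: vec_eq_iff)
qed

lemma vsig_inj: "inj (vsig :: real^'k::finite bit0 \<Rightarrow> _)"
  by (metis injI vsig_row_0)

lemma vsig_scaleR: "vsig (t *\<^sub>R u) = t *\<^sub>R vsig u"
  by (simp add: vsig_def scaleR_sum_right)

lemma vsig_axis: "vsig (axis b 1) = mpow gmat (idx (b::'k::finite bit0))"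
proof -
  have "vsig (axis b 1) = (\<Sum>l<CARD('k bit0). (if l = idx b then mpow gmat l else 0))"
    unfolding vsig_def by (intro sum.cong) (auto simp: axis_def ix_idx idx_ix)
  then show ?thesis using idx_less_card[of b] by simp
qed

lemma vsig_cunit: "vsig (cunit :: real^'k::finite bit0) = mat 1"
  unfolding cunit_def vsig_axis by (simp add: idx_ix)

lemma vsig_commute_gmat: "vsig u ** gmat = gmat ** vsig u"
  unfolding vsig_def matrix_mul_sum_left matrix_mul_sum_right
  by (simp add: scaleR_mpow_commute)

lemma commute_gmat_row_0_eq_0:
  fixes N :: "real^'k::finite bit0^'k bit0"
  assumes "N ** gmat = gmat ** N" "N $ ix 0 = 0"
  shows "N = 0"
proof -
  have "N $ ix r = 0" if "r < CARD('k bit0)" for r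
    using that
  proof (induction r)
    case 0 then show ?case using assms(2) by simp
  next
    case (Suc r)
    have r: "r < CARD('k bit0)" "r + 1 < CARD('k bit0)" using Suc.prems by auto
    have "N $ ix (r + 1) $ c = 0" for c
    proof -
      have "(N ** gmat) $ ix r $ c = 0"
        using Suc.IH r by (simp add: matrix_matrix_mult_def)
      moreover have "(gmat ** N) $ ix r $ c = (\<Sum>e\<in>UNIV. (if idx e = r + 1 then N $ e $ c else 0))"
        unfolding matrix_matrix_mult_def using r by (auto simp: gmat_entry idx_ix intro!: sum.cong)
      moreover have "\<dots> = N $ ix (r + 1) $ c" using r(2) by (rule sum_if_idx_eq)
      ultimately show ?thesis using assms(1) by simp
    qed
    then show ?case by (simp add: vec_eq_iff)
  qed
  then show ?thesis by (metis idx_less_card ix_idx vec_eq_iff zero_index)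
qed

lemma vsig_row_0_commuting:
  assumes "M ** gmat = gmat ** M"
  shows "vsig (M $ ix 0) = (M :: real^'k::finite bit0^'k bit0)"
proof -
  let ?D = "M - vsig (M $ ix 0)"
  have "?D ** gmat = gmat ** ?D"
    using assms vsig_commute_gmat[of "M $ ix 0"]
    by (simp add: matrix_mul_diff_left matrix_mul_diff_right)
  moreover have "?D $ ix 0 = 0"
    by (simp add: vsig_row_0)
  ultimately have "?D = 0" by (rule commute_gmat_row_0_eq_0)
  then show ?thesis by simp
qed

lemma vsig_cmul: "vsig (cmul u v) = vsig u ** vsig (v::real^'k::finite bit0)"
proof -
  let ?X = "vsig u ** vsig v"
  have "?X ** gmat = gmat ** ?X" by (metis vsig_commute_gmat matrix_mul_assoc)
  then have X: "vsig (?X $ ix 0) = ?X" by (rule vsig_row_0_commuting)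
  then have "cmul u v = ?X $ ix 0" unfolding cmul_def by (metis inv_f_f vsig_inj)
  then show ?thesis using X by simp
qed

definition axis_inv :: "real \<Rightarrow> 'k::finite bit0 \<Rightarrow> real^'k bit0^'k bit0" where
  "axis_inv t b = (- 1 / t) *\<^sub>R mpow gmat (CARD('k bit0) - idx b)"

lemma mpow_gmat_complement:
  fixes b :: "'k::finite bit0"
  shows "mpow gmat (idx b) ** mpow gmat (CARD('k bit0) - idx b) = - (mat 1 :: real^'k bit0^'k bit0)"
proof -
  have "mpow gmat (idx b) ** mpow gmat (CARD('k bit0) - idx b)
      = (mpow gmat (CARD('k bit0)) :: real^'k bit0^'k bit0)"
    using idx_less_card[of b] by (simp add: mpow_add[symmetric])
  then show ?thesis by (simp only: mpow_gmat_card)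
qed

lemma vsig_axis_mul_axis_inv:
  fixes b :: "'k::finite bit0"
  assumes "t \<noteq> 0"
  shows "vsig (t *\<^sub>R axis b 1) ** axis_inv t b = mat 1"
    and "axis_inv t b ** vsig (t *\<^sub>R axis b 1) = mat 1"
proof -
  have "vsig (t *\<^sub>R axis b 1) ** axis_inv t b
      = (-1/t * t) *\<^sub>R (mpow gmat (idx b) ** mpow gmat (CARD('k bit0) - idx b))"
    unfolding vsig_scaleR vsig_axis axis_inv_def
    by (simp only: scalar_matrix_assoc[symmetric] matrix_mul_scaleR_right scaleR_scaleR)
  then show "vsig (t *\<^sub>R axis b 1) ** axis_inv t b = mat 1"
    using assms mpow_gmat_complement[of b] by simp
  then show "axis_inv t b ** vsig (t *\<^sub>R axis b 1) = mat 1"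
    unfolding vsig_scaleR vsig_axis axis_inv_def
    by (simp only: scalar_matrix_assoc[symmetric] matrix_mul_scaleR_right mpow_commute
        scaleR_left_commute)
qed

lemma vsig_cinv_axis:
  assumes "t \<noteq> 0"
  shows "vsig (cinv (t *\<^sub>R axis b 1)) = axis_inv t (b::'k::finite bit0)"
proof -
  let ?d = "t *\<^sub>R axis b 1"
  let ?y = "axis_inv t b $ ix 0"
  have vy: "vsig ?y = axis_inv t b"
    unfolding axis_inv_def by (intro vsig_row_0_commuting scaleR_mpow_commute)
  have "cmul ?d ?y = cunit"
    using vsig_inj vsig_axis_mul_axis_inv(1)[OF assms] unfolding inj_def
    by (metis vsig_cmul vy vsig_cunit)
  moreover have "y = ?y" if "cmul ?d y = cunit" for y
  proof -
    have "vsig ?d ** vsig y = mat 1" using that by (metis vsig_cmul vsig_cunit)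
    then have "axis_inv t b ** (vsig ?d ** vsig y) = axis_inv t b" by simp
    then have "vsig y = axis_inv t b"
      by (simp add: matrix_mul_assoc vsig_axis_mul_axis_inv(2)[OF assms])
    then show ?thesis using vy vsig_inj unfolding inj_def by metis
  qed
  ultimately have "cinv ?d = ?y" unfolding cinv_def by (rule the_equality)
  then show ?thesis using vy by simp
qed

lemma scaleR_axis_in_Gn:
  assumes "t \<noteq> 0"
  shows "t *\<^sub>R axis b 1 \<in> (Gn :: (real^'k::finite bit0) set)"
proof -
  have "invertible (vsig (t *\<^sub>R axis b 1))"
    unfolding invertible_def using vsig_axis_mul_axis_inv[OF assms] by blast
  then show ?thesis unfolding Gn_def by (simp add: invertible_det_nz)
qed


lemma cmul_axis_cinv_axis:
  assumes "t \<noteq> 0"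
  shows "cmul (cmul u (cinv (t *\<^sub>R axis b 1))) (axis b 1) = (1 / t) *\<^sub>R (u::real^'k::finite bit0)"
proof -
  have "axis_inv t b ** vsig (axis b 1)
      = (-1 / t) *\<^sub>R (mpow gmat (CARD('k bit0) - idx b) ** mpow gmat (idx b))"
    by (simp add: axis_inv_def vsig_axis scalar_matrix_assoc)
  also have "\<dots> = (1 / t) *\<^sub>R mat 1"
    using mpow_gmat_complement[of b] by (subst mpow_commute) simp
  finally have "axis_inv t b ** vsig (axis b 1) = (1 / t) *\<^sub>R mat 1" .
  then have "vsig (cmul (cmul u (cinv (t *\<^sub>R axis b 1))) (axis b 1)) = vsig ((1 / t) *\<^sub>R u)"
    by (simp add: vsig_cmul vsig_cinv_axis[OF assms] vsig_scaleR matrix_mul_assoc[symmetric]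
        matrix_mul_scaleR_right)
  then show ?thesis by (rule injD[OF vsig_inj])
qed

lemma cmul_eq_row_0: "cmul u v = (vsig u ** vsig v) $ ix (0::nat)"
  by (metis vsig_cmul vsig_row_0)

lemma has_derivative_along_axis:
  fixes f :: "real^'k::finite bit0 \<Rightarrow> real^'k bit0"
  assumes L: "((\<lambda>d. cmul (f (a + d) - f a) (cinv d)) \<longlongrightarrow> L) (at 0 within Gn)"
  shows "((\<lambda>t. f (a + t *\<^sub>R axis b 1) $ m) has_real_derivative cmul L (axis b 1) $ m) (at 0)"
proof -
  let ?e = "axis b 1 :: real^'k bit0"
  let ?H = "\<lambda>t. cmul (f (a + t *\<^sub>R ?e) - f a) (cinv (t *\<^sub>R ?e))"
  have ne: "\<forall>\<^sub>F t in at (0::real). t \<noteq> 0" by (simp add: eventually_at_filter)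
  have "((\<lambda>t. t *\<^sub>R ?e) \<longlongrightarrow> 0 *\<^sub>R ?e) (at (0::real))"
    by (intro tendsto_intros)
  then have "((\<lambda>t. t *\<^sub>R ?e) \<longlongrightarrow> 0) (at (0::real))" by simp
  moreover have "\<forall>\<^sub>F t in at (0::real). t *\<^sub>R ?e \<in> Gn - {0}"
    using ne by eventually_elim (auto simp: scaleR_axis_in_Gn)
  ultimately have "filterlim (\<lambda>t. t *\<^sub>R ?e) (at 0 within Gn) (at (0::real))"
    by (rule filterlim_at_withinI)
  then have "(?H \<longlongrightarrow> L) (at 0)" by (rule filterlim_compose[OF L])
  then have "((\<lambda>t. vsig (?H t)) \<longlongrightarrow> vsig L) (at 0)"
    unfolding vsig_def by (intro tendsto_intros)
  then have "((\<lambda>t. cmul (?H t) ?e $ m) \<longlongrightarrow> cmul L ?e $ m) (at 0)"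
    unfolding cmul_eq_row_0 matrix_matrix_mult_def by (intro tendsto_intros)
  moreover have "\<forall>\<^sub>F t in at 0. cmul (?H t) ?e $ m
      = (f (a + t *\<^sub>R ?e) $ m - f (a + 0 *\<^sub>R ?e) $ m) / (t - 0)"
    using ne by eventually_elim (simp add: cmul_axis_cinv_axis divide_inverse_commute)
  ultimately show ?thesis
    unfolding has_field_derivative_iff by (rule Lim_transform_eventually)
qed

lemma partial_eq_cmul_axis:
  fixes f :: "real^'k::finite bit0 \<Rightarrow> real^'k bit0"
  assumes "((\<lambda>d. cmul (f (a + d) - f a) (cinv d)) \<longlongrightarrow> L) (at 0 within Gn)"
  shows "partial b (\<lambda>y. f y $ m) a = cmul L (axis b 1) $ m"
  unfolding partial_def using has_derivative_along_axis[OF assms] by (rule DERIV_imp_deriv)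

text \<open>By the entry formula, \<open>g\<^sup>i\<^sup>+\<^sup>k\<close> is \<open>g\<^sup>i\<close> with its columns shifted by \<open>k\<close>,
  the wrapped-around half negated because \<open>g\<^sup>2\<^sup>k = -1\<close>.\<close>
lemma cmul_axis_shift:
  fixes u :: "real^'k::finite bit0"
  assumes "m < CARD('k)" "i < CARD('k)"
  shows "cmul u (axis (ix i) 1) $ ix m = cmul u (axis (ix (i + CARD('k))) 1) $ ix (m + CARD('k))"
    and "cmul u (axis (ix i) 1) $ ix (m + CARD('k)) = - cmul u (axis (ix (i + CARD('k))) 1) $ ix m"
proof -
  let ?K = "CARD('k)"
  have ix: "idx (ix i :: 'k bit0) = i" "idx (ix (i + ?K) :: 'k bit0) = i + ?K"
    "idx (ix m :: 'k bit0) = m" "idx (ix (m + ?K) :: 'k bit0) = m + ?K"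
    using assms by (auto intro!: idx_ix)
  have "mpow gmat i $ c $ (ix m :: 'k bit0) = mpow gmat (i + ?K) $ c $ ix (m + ?K)"
    and "mpow gmat i $ c $ (ix (m + ?K) :: 'k bit0) = - mpow gmat (i + ?K) $ c $ ix m" for c
    using assms idx_less_card[of c] by (auto simp: mpow_gmat_entry ix)
  then show "cmul u (axis (ix i) 1) $ ix m = cmul u (axis (ix (i + ?K)) 1) $ ix (m + ?K)"
    and "cmul u (axis (ix i) 1) $ ix (m + ?K) = - cmul u (axis (ix (i + ?K)) 1) $ ix m"
    unfolding cmul_eq_row_0 vsig_axis ix
    by (simp_all add: matrix_matrix_mult_def sum_negf[symmetric])
qed

lemma cauchy_riemann:
  fixes f :: "real^'k::finite bit0 \<Rightarrow> real^'k bit0"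
  assumes "cdifferentiable_at f a" "m < CARD('k)" "i < CARD('k)"
  shows "partial (ix i) (\<lambda>y. f y $ ix m) a
           = partial (ix (i + CARD('k))) (\<lambda>y. f y $ ix (m + CARD('k))) a"
    and "partial (ix i) (\<lambda>y. f y $ ix (m + CARD('k))) a
           = - partial (ix (i + CARD('k))) (\<lambda>y. f y $ ix m) a"
proof -
  obtain L where L: "((\<lambda>d. cmul (f (a + d) - f a) (cinv d)) \<longlongrightarrow> L) (at 0 within Gn)"
    using assms(1) unfolding cdifferentiable_at_def by blast
  then show "partial (ix i) (\<lambda>y. f y $ ix m) a
           = partial (ix (i + CARD('k))) (\<lambda>y. f y $ ix (m + CARD('k))) a"
    and "partial (ix i) (\<lambda>y. f y $ ix (m + CARD('k))) a
           = - partial (ix (i + CARD('k))) (\<lambda>y. f y $ ix m) a"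
    using partial_eq_cmul_axis[OF L] cmul_axis_shift[OF assms(2,3)] by simp_all
qed

lemma has_partial_DERIV_line:
  assumes "\<forall>y\<in>S. has_partial i h y" "y + s *\<^sub>R axis i 1 \<in> S"
  shows "((\<lambda>\<sigma>. h (y + \<sigma> *\<^sub>R axis i 1)) has_real_derivative partial i h (y + s *\<^sub>R axis i 1)) (at s)"
proof -
  let ?H = "\<lambda>\<sigma>. h (y + \<sigma> *\<^sub>R axis i 1)"
  have "((\<lambda>t. h (y + s *\<^sub>R axis i 1 + t *\<^sub>R axis i 1)) has_real_derivative
      partial i h (y + s *\<^sub>R axis i 1)) (at 0)"
    using assms unfolding has_partial_def partial_def by (simp add: DERIV_deriv_iff_real_differentiable)
  moreover have "(\<lambda>t. h (y + s *\<^sub>R axis i 1 + t *\<^sub>R axis i 1)) = (\<lambda>t. ?H (t + s))"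
    by (simp add: scaleR_add_left algebra_simps)
  ultimately have "((\<lambda>t. ?H (t + s)) has_real_derivative partial i h (y + s *\<^sub>R axis i 1)) (at 0)"
    by simp
  then show ?thesis using DERIV_shift[of ?H _ 0 s] by simp
qed

lemma second_difference_mvt:
  fixes h h1 h12 :: "real \<Rightarrow> real \<Rightarrow> real"
  assumes "0 < e"
    and h: "\<And>\<sigma> \<tau>. 0 \<le> \<sigma> \<Longrightarrow> \<sigma> \<le> e \<Longrightarrow> 0 \<le> \<tau> \<Longrightarrow> \<tau> \<le> e \<Longrightarrow>
      ((\<lambda>\<sigma>. h \<sigma> \<tau>) has_real_derivative h1 \<sigma> \<tau>) (at \<sigma>)"
    and h1: "\<And>\<sigma> \<tau>. 0 \<le> \<sigma> \<Longrightarrow> \<sigma> \<le> e \<Longrightarrow> 0 \<le> \<tau> \<Longrightarrow> \<tau> \<le> e \<Longrightarrow>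
      ((\<lambda>\<tau>. h1 \<sigma> \<tau>) has_real_derivative h12 \<sigma> \<tau>) (at \<tau>)"
  obtains \<sigma> \<tau> where "0 < \<sigma>" "\<sigma> < e" "0 < \<tau>" "\<tau> < e"
    "h e e - h e 0 - h 0 e + h 0 0 = e * e * h12 \<sigma> \<tau>"
proof -
  have "((\<lambda>\<sigma>. h \<sigma> e - h \<sigma> 0) has_real_derivative h1 \<sigma> e - h1 \<sigma> 0) (at \<sigma>)"
    if "0 \<le> \<sigma>" "\<sigma> \<le> e" for \<sigma>
    using that assms(1) by (intro DERIV_diff h) auto
  then obtain \<sigma> where \<sigma>: "0 < \<sigma>" "\<sigma> < e"
    "(h e e - h e 0) - (h 0 e - h 0 0) = (e - 0) * (h1 \<sigma> e - h1 \<sigma> 0)"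
    using MVT2[OF assms(1), of "\<lambda>\<sigma>. h \<sigma> e - h \<sigma> 0" "\<lambda>\<sigma>. h1 \<sigma> e - h1 \<sigma> 0"] by blast
  obtain \<tau> where \<tau>: "0 < \<tau>" "\<tau> < e" "h1 \<sigma> e - h1 \<sigma> 0 = (e - 0) * h12 \<sigma> \<tau>"
    using MVT2[OF assms(1), of "h1 \<sigma>" "h12 \<sigma>"] h1 \<sigma>(1,2) by force
  show ?thesis using that[OF \<sigma>(1,2) \<tau>(1,2)] \<sigma>(3) \<tau>(3) by (simp add: algebra_simps)
qed

text \<open>Both orders of differentiation compute the same second difference of \<open>g\<close> on a small
  square, so by the mean value theorem the two mixed partials agree at some pair of nearby points.\<close>
lemma mixed_partials_meet:
  fixes g :: "real^'n::finite \<Rightarrow> real"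
  assumes C2: "C2_partials S g" and "0 < e" and S: "cball x (2 * e) \<subseteq> S"
  obtains y z where "y \<in> cball x (2 * e)" "z \<in> cball x (2 * e)"
    "partial j (partial i g) y = partial i (partial j g) z"
proof -
  let ?u = "axis i 1 :: real^'n" and ?v = "axis j 1 :: real^'n"
  define p where "p = (\<lambda>\<sigma> \<tau>. x + \<sigma> *\<^sub>R ?u + \<tau> *\<^sub>R ?v)"
  have p_cball: "p \<sigma> \<tau> \<in> cball x (2 * e)" if "0 \<le> \<sigma>" "\<sigma> \<le> e" "0 \<le> \<tau>" "\<tau> \<le> e" for \<sigma> \<tau>
  proof -
    have "dist (p \<sigma> \<tau>) x = norm (\<sigma> *\<^sub>R ?u + \<tau> *\<^sub>R ?v)"
      by (simp add: p_def dist_norm)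
    also have "\<dots> \<le> norm (\<sigma> *\<^sub>R ?u) + norm (\<tau> *\<^sub>R ?v)"
      by (rule norm_triangle_ineq)
    finally show ?thesis using that by (simp add: dist_commute)
  qed
  have p_in_S: "p \<sigma> \<tau> \<in> S" if "0 \<le> \<sigma>" "\<sigma> \<le> e" "0 \<le> \<tau>" "\<tau> \<le> e" for \<sigma> \<tau>
    using p_cball[OF that] S by blast
  have has_partials: "\<forall>y\<in>S. has_partial a g y" "\<forall>y\<in>S. has_partial a (partial b g) y" for a b
    using C2 unfolding C2_partials_def by blast+
  have along_u: "((\<lambda>\<sigma>. h (p \<sigma> \<tau>)) has_real_derivative partial i h (p \<sigma> \<tau>)) (at \<sigma>)"
    if "\<forall>y\<in>S. has_partial i h y" "p \<sigma> \<tau> \<in> S" for h \<sigma> \<tau>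
    using has_partial_DERIV_line[of S i h "x + \<tau> *\<^sub>R ?v" \<sigma>] that
    by (simp add: p_def algebra_simps)
  have along_v: "((\<lambda>\<tau>. h (p \<sigma> \<tau>)) has_real_derivative partial j h (p \<sigma> \<tau>)) (at \<tau>)"
    if "\<forall>y\<in>S. has_partial j h y" "p \<sigma> \<tau> \<in> S" for h \<sigma> \<tau>
    using has_partial_DERIV_line[of S j h "x + \<sigma> *\<^sub>R ?u" \<tau>] that by (simp add: p_def)
  have "((\<lambda>\<sigma>. g (p \<sigma> \<tau>)) has_real_derivative partial i g (p \<sigma> \<tau>)) (at \<sigma>)"
    "((\<lambda>\<tau>. partial i g (p \<sigma> \<tau>)) has_real_derivative partial j (partial i g) (p \<sigma> \<tau>)) (at \<tau>)"
    "((\<lambda>\<tau>. g (p \<sigma> \<tau>)) has_real_derivative partial j g (p \<sigma> \<tau>)) (at \<tau>)"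
    "((\<lambda>\<sigma>. partial j g (p \<sigma> \<tau>)) has_real_derivative partial i (partial j g) (p \<sigma> \<tau>)) (at \<sigma>)"
    if "0 \<le> \<sigma>" "\<sigma> \<le> e" "0 \<le> \<tau>" "\<tau> \<le> e" for \<sigma> \<tau>
    using p_in_S[OF that] by (simp_all add: along_u along_v has_partials)
  note derivs = this
  obtain \<sigma>1 \<tau>1 where 1: "0 < \<sigma>1" "\<sigma>1 < e" "0 < \<tau>1" "\<tau>1 < e"
    "g (p e e) - g (p e 0) - g (p 0 e) + g (p 0 0) = e * e * partial j (partial i g) (p \<sigma>1 \<tau>1)"
    by (rule second_difference_mvt[OF \<open>0 < e\<close> derivs(1,2)])
  obtain \<tau>2 \<sigma>2 where 2: "0 < \<tau>2" "\<tau>2 < e" "0 < \<sigma>2" "\<sigma>2 < e"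
    "g (p e e) - g (p 0 e) - g (p e 0) + g (p 0 0) = e * e * partial i (partial j g) (p \<sigma>2 \<tau>2)"
    by (rule second_difference_mvt[OF \<open>0 < e\<close> derivs(3,4)])
  have "e * e * partial j (partial i g) (p \<sigma>1 \<tau>1) = e * e * partial i (partial j g) (p \<sigma>2 \<tau>2)"
    using 1(5) 2(5) by linarith
  then have "partial j (partial i g) (p \<sigma>1 \<tau>1) = partial i (partial j g) (p \<sigma>2 \<tau>2)"
    using \<open>0 < e\<close> by simp
  then show ?thesis using 1(1-4) 2(1-4) by (intro that[OF p_cball p_cball]) auto
qed

lemma eq_if_meet_arbitrarily_close:
  fixes F G :: "'a::metric_space \<Rightarrow> 'b::metric_space"
  assumes "continuous (at x) F" "continuous (at x) G"
    and meet: "\<And>e. 0 < e \<Longrightarrow> \<exists>y z. dist y x \<le> e \<and> dist z x \<le> e \<and> F y = G z"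
  shows "F x = G x"
proof (rule ccontr)
  assume "F x \<noteq> G x"
  define \<epsilon> where "\<epsilon> = dist (F x) (G x) / 2"
  have "\<epsilon> > 0" using \<open>F x \<noteq> G x\<close> by (simp add: \<epsilon>_def)
  then obtain d1 d2 where d: "d1 > 0" "\<And>y. dist y x < d1 \<Longrightarrow> dist (F y) (F x) < \<epsilon>"
    "d2 > 0" "\<And>z. dist z x < d2 \<Longrightarrow> dist (G z) (G x) < \<epsilon>"
    using assms(1,2) unfolding continuous_at_eps_delta by metis
  obtain y z where yz: "dist y x \<le> min d1 d2 / 2" "dist z x \<le> min d1 d2 / 2" "F y = G z"
    using meet[of "min d1 d2 / 2"] d by auto
  have "dist (F y) (F x) < \<epsilon>" using yz(1) d(1,3) by (intro d(2)) auto
  moreover have "dist (G z) (G x) < \<epsilon>" using yz(2) d(1,3) by (intro d(4)) auto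
  moreover have "dist (F x) (G x) \<le> dist (F y) (F x) + dist (G z) (G x)"
    using \<open>F y = G z\<close> by (metis dist_commute dist_triangle)
  ultimately show False unfolding \<epsilon>_def by linarith
qed

lemma partial_partial_commute:
  fixes g :: "real^'n::finite \<Rightarrow> real"
  assumes "open S" "x \<in> S" "C2_partials S g"
  shows "partial j (partial i g) x = partial i (partial j g) x"
proof (rule eq_if_meet_arbitrarily_close[where F = "partial j (partial i g)"
      and G = "partial i (partial j g)"])
  show "continuous (at x) (partial j (partial i g))" "continuous (at x) (partial i (partial j g))"
    using assms unfolding C2_partials_def by (meson continuous_on_eq_continuous_at)+
  obtain r where "r > 0" "cball x r \<subseteq> S" using assms(1,2) open_contains_cball by blast
  fix e :: real assume "0 < e"
  let ?e = "min e r / 2"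
  have "cball x (2 * ?e) \<subseteq> S" using \<open>cball x r \<subseteq> S\<close> by auto
  then obtain y z where "y \<in> cball x (2 * ?e)" "z \<in> cball x (2 * ?e)"
    "partial j (partial i g) y = partial i (partial j g) z"
    using mixed_partials_meet[OF assms(3)] \<open>0 < e\<close> \<open>r > 0\<close> by (metis half_gt_zero min_less_iff_conj)
  then show "\<exists>y z. dist y x \<le> e \<and> dist z x \<le> e \<and>
      partial j (partial i g) y = partial i (partial j g) z"
    by (intro exI[of _ y] exI[of _ z]) (auto simp: dist_commute)
qed

lemma partial_cong:
  assumes "open S" "x \<in> S" "\<And>y. y \<in> S \<Longrightarrow> F y = G y"
  shows "partial i F x = partial i G x"
proof -
  obtain r where "r > 0" "ball x r \<subseteq> S" using assms(1,2) open_contains_ball by blast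
  moreover have "\<forall>\<^sub>F t in nhds (0::real). dist t 0 < r"
    using \<open>r > 0\<close> unfolding eventually_nhds_metric by blast
  ultimately have "\<forall>\<^sub>F t in nhds (0::real). x + t *\<^sub>R axis i 1 \<in> S"
    by (elim eventually_mono) (auto simp: dist_norm)
  then have "\<forall>\<^sub>F t in nhds (0::real). F (x + t *\<^sub>R axis i 1) = G (x + t *\<^sub>R axis i 1)"
    by eventually_elim (rule assms(3))
  then show ?thesis unfolding partial_def by (rule deriv_cong_ev) simp
qed

lemma partial_uminus:
  assumes "has_partial i F x"
  shows "partial i (\<lambda>y. - F y) x = - partial i F x"
proof -
  have "((\<lambda>t. F (x + t *\<^sub>R axis i 1)) has_real_derivative partial i F x) (at 0)"
    using assms unfolding has_partial_def partial_def by (simp add: DERIV_deriv_iff_real_differentiable)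
  then show ?thesis unfolding partial_def by (intro DERIV_imp_deriv DERIV_minus)
qed

lemma laplace_of_cauchy_riemann:
  fixes u v :: "real^'n::finite \<Rightarrow> real"
  assumes "open S" "x \<in> S" "C2_partials S v"
    and cr1: "\<And>y. y \<in> S \<Longrightarrow> partial a u y = partial b v y"
    and cr2: "\<And>y. y \<in> S \<Longrightarrow> partial a v y = - partial b u y"
  shows "partial a (partial a u) x + partial b (partial b u) x = 0"
proof -
  have "partial a (partial a u) x = partial a (partial b v) x"
    using assms(1,2) cr1 by (rule partial_cong)
  moreover have "partial b (partial b u) x = partial b (\<lambda>y. - partial a v y) x"
    using assms(1,2) by (rule partial_cong) (simp add: cr2)
  moreover have "\<dots> = - partial b (partial a v) x"
    using assms(2,3) unfolding C2_partials_def by (intro partial_uminus) blast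
  moreover have "partial a (partial b v) x = partial b (partial a v) x"
    using assms(1-3) by (rule partial_partial_commute)
  ultimately show ?thesis by simp
qed

lemma harmonic_on_setI_bit0:
  fixes g :: "real^'k::finite bit0 \<Rightarrow> real"
  assumes "C2_partials S g"
    and "\<And>x i. x \<in> S \<Longrightarrow> i < CARD('k) \<Longrightarrow>
      partial (ix i) (partial (ix i) g) x
        + partial (ix (i + CARD('k))) (partial (ix (i + CARD('k))) g) x = 0"
  shows "harmonic_on_set S g"
  using assms unfolding harmonic_on_set_def sum_bit0_halves by simp

theorem mainTheorem9:
  fixes \<Omega> :: "(real^('k::finite bit0)) set"
    and f :: "real^('k bit0) \<Rightarrow> real^('k bit0)"
  assumes "open \<Omega>"
    and "analytic_on_set \<Omega> f"
  shows "(\<forall>m<CARD('k). \<forall>i<CARD('k). \<forall>x\<in>\<Omega>.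
            partial (ix i) (\<lambda>y. f y $ ix m) x
              = partial (ix (i + CARD('k))) (\<lambda>y. f y $ ix (m + CARD('k))) x
          \<and> partial (ix i) (\<lambda>y. f y $ ix (m + CARD('k))) x
              = - partial (ix (i + CARD('k))) (\<lambda>y. f y $ ix m) x)
       \<and> (\<forall>m<CARD('k). \<forall>i<CARD('k). \<forall>x\<in>\<Omega>.
            partial (ix i) (partial (ix i) (\<lambda>y. f y $ ix m)) x
              + partial (ix (i + CARD('k))) (partial (ix (i + CARD('k))) (\<lambda>y. f y $ ix m)) x = 0
          \<and> partial (ix i) (partial (ix i) (\<lambda>y. f y $ ix (m + CARD('k)))) x
              + partial (ix (i + CARD('k))) (partial (ix (i + CARD('k))) (\<lambda>y. f y $ ix (m + CARD('k)))) x = 0)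
       \<and> (\<forall>m. harmonic_on_set \<Omega> (\<lambda>y. f y $ m))"
proof -
  have C2: "C2_partials \<Omega> (\<lambda>y. f y $ m)" for m
    using assms(2) unfolding analytic_on_set_def by blast
  have "cdifferentiable_at f a" if "a \<in> \<Omega>" for a
    using assms(2) that unfolding analytic_on_set_def by blast
  note CR = cauchy_riemann[OF this]
  have laplace_re: "partial (ix i) (partial (ix i) (\<lambda>y. f y $ ix m)) x
      + partial (ix (i + CARD('k))) (partial (ix (i + CARD('k))) (\<lambda>y. f y $ ix m)) x = 0"
    if "m < CARD('k)" "i < CARD('k)" "x \<in> \<Omega>" for m i x
    using assms(1) that(3) C2 CR[OF _ that(1,2)] by (intro laplace_of_cauchy_riemann) auto
  have laplace_im: "partial (ix i) (partial (ix i) (\<lambda>y. f y $ ix (m + CARD('k)))) x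
      + partial (ix (i + CARD('k))) (partial (ix (i + CARD('k))) (\<lambda>y. f y $ ix (m + CARD('k)))) x = 0"
    if "m < CARD('k)" "i < CARD('k)" "x \<in> \<Omega>" for m i x
    using assms(1) that(3) C2 CR[OF _ that(1,2)]
    by (subst add.commute, intro laplace_of_cauchy_riemann) (auto simp: minus_equation_iff)
  have "harmonic_on_set \<Omega> (\<lambda>y. f y $ m)" for m
  proof -
    obtain j where "j < CARD('k)" "m = ix j \<or> m = ix (j + CARD('k))" by (rule bit0_halves_cases)
    then show ?thesis using C2 laplace_re laplace_im by (intro harmonic_on_setI_bit0) auto
  qed
  then show ?thesis using CR laplace_re laplace_im by blast
qed

end
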